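(* For finite simple graphs $G$ and $H$ with disjoint vertex sets, $\mathrm{mur}(G\cup H)\le \mathrm{mur}(G)+|V(H)|+1$.
   Context: For a finite simple undirected graph $G$ on vertices $v_1,\dots,v_n$, let $A_G$ be its $(0,1)$-adjacency matrix, $D_G=\mathrm{diag}(d_1,\dots,d_n)$ with $d_i$ the degree of $v_i$, $I$ the $n\times n$ identity matrix and $J$ the $n\times n$ all-ones matrix. A universal adjacency matrix of $G$ is any matrix $\alpha A_G+\beta I+\gamma J+\delta D_G$ with real scalars $\alpha,\beta,\gamma,\delta$ and $\alpha\neq 0$. The minimum universal rank $\mathrm{mur}(G)$ is the minimum rank over all universal adjacency matrices of $G$. The union $G\cup H$ is the graph with vertex set $V(G)\cup V(H)$ and edge set $E(G)\cup E(H)$. *)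

theory Defs
  imports Complex_Main
begin

definition simple_graph :: "'a set \<Rightarrow> ('a \<times> 'a) set \<Rightarrow> bool" where
  "simple_graph V E \<longleftrightarrow> finite V \<and> E \<subseteq> V \<times> V \<and> sym E \<and> irrefl E"

definition degree :: "('a \<times> 'a) set \<Rightarrow> 'a \<Rightarrow> nat" where
  "degree E v = card {u. (v, u) \<in> E}"

text \<open>Matrices indexed by the vertex set: functions 'a => 'a => real.
The universal adjacency matrix alpha*A + beta*I + gamma*J + delta*D.\<close>
definition univ_adj :: "('a \<times> 'a) set \<Rightarrow> real \<Rightarrow> real \<Rightarrow> real \<Rightarrow> real \<Rightarrow> 'a \<Rightarrow> 'a \<Rightarrow> real" where
  "univ_adj E \<alpha> \<beta> \<gamma> \<delta> i j =
     \<alpha> * (if (i, j) \<in> E then 1 else 0) + \<beta> * (if i = j then 1 else 0) + \<gamma>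
     + \<delta> * (if i = j then real (degree E i) else 0)"

definition rows_indep :: "'a set \<Rightarrow> ('a \<Rightarrow> 'a \<Rightarrow> real) \<Rightarrow> 'a set \<Rightarrow> bool" where
  "rows_indep V M S \<longleftrightarrow>
     (\<forall>c :: 'a \<Rightarrow> real. (\<forall>j\<in>V. (\<Sum>i\<in>S. c i * M i j) = 0) \<longrightarrow> (\<forall>i\<in>S. c i = 0))"

definition mat_rank :: "'a set \<Rightarrow> ('a \<Rightarrow> 'a \<Rightarrow> real) \<Rightarrow> nat" where
  "mat_rank V M = Max {card S | S. S \<subseteq> V \<and> rows_indep V M S}"

definition mur :: "'a set \<Rightarrow> ('a \<times> 'a) set \<Rightarrow> nat" where
  "mur V E = (LEAST r. \<exists>\<alpha> \<beta> \<gamma> \<delta>. \<alpha> \<noteq> 0 \<and> r = mat_rank V (univ_adj E \<alpha> \<beta> \<gamma> \<delta>))"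

end

theory Submission
  imports Defs
begin

text \<open>Restricting the universal adjacency matrix of \<open>G \<union> H\<close> to the rows of \<open>G\<close> gives the
universal adjacency matrix of \<open>G\<close> on the columns of \<open>G\<close> (with the same parameters) and the
constant \<open>\<gamma>\<close> on the columns of \<open>H\<close>. Deleting the rows of \<open>H\<close> loses at most \<open>|V(H)|\<close> in rank.
For a set of remaining rows independent in the whole matrix, every nonzero dependency
among their \<open>G\<close>-columns has nonzero coefficient sum, because the \<open>H\<close>-columns are constant.
So these dependencies form a space of dimension at most one, and dropping a single row
restores independence on the \<open>G\<close>-columns.\<close>

lemma rows_indep_subset:
  assumes "rows_indep V M S" "S' \<subseteq> S" "finite S"
  shows "rows_indep V M S'"
  unfolding rows_indep_def
proof (intro allI impI)
  fix c assume dep: "\<forall>j\<in>V. (\<Sum>i\<in>S'. c i * M i j) = 0"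
  define c' where "c' i = (if i \<in> S' then c i else 0)" for i
  have "(\<Sum>i\<in>S. c' i * M i j) = (\<Sum>i\<in>S'. c i * M i j)" for j
    using assms(2,3) by (intro sum.mono_neutral_cong_right) (auto simp: c'_def)
  then have "\<forall>i\<in>S. c' i = 0" using assms(1) dep unfolding rows_indep_def by metis
  then show "\<forall>i\<in>S'. c i = 0" using assms(2) unfolding c'_def by (metis subsetD)
qed

lemma finite_indep_row_cards:
  assumes "finite V"
  shows "finite {card S |S. S \<subseteq> V \<and> rows_indep V M S}"
  by (rule finite_subset[of _ "{..card V}"]) (auto intro: card_mono assms)

lemma card_le_mat_rank:
  assumes "finite V" "S \<subseteq> V" "rows_indep V M S"
  shows "card S \<le> mat_rank V M"
  unfolding mat_rank_def using assms finite_indep_row_cards[OF assms(1)] by (auto intro: Max_ge)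

lemma mat_rank_le:
  assumes "finite V" "\<And>S. S \<subseteq> V \<Longrightarrow> rows_indep V M S \<Longrightarrow> card S \<le> b"
  shows "mat_rank V M \<le> b"
proof -
  have "rows_indep V M {}" by (simp add: rows_indep_def)
  then show ?thesis
    unfolding mat_rank_def using assms finite_indep_row_cards[OF assms(1)]
    by (subst Max_le_iff) auto
qed

text \<open>If no nonzero dependency among the rows \<open>S\<close> has coefficient sum \<open>0\<close>, then a dependency
\<open>c\<close> with \<open>c i\<^sub>0 \<noteq> 0\<close> spans all of them up to scaling: any dependency \<open>d\<close> of \<open>S - {i\<^sub>0}\<close> minus
the multiple of \<open>c\<close> with the same coefficient sum vanishes, and its \<open>i\<^sub>0\<close>-entry forces \<open>d = 0\<close>.\<close>

lemma rows_indep_Diff_singleton: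
  assumes fin: "finite S"
    and zero_sum_indep: "\<And>e. \<forall>j\<in>V. (\<Sum>i\<in>S. e i * M i j) = 0 \<Longrightarrow> (\<Sum>i\<in>S. e i) = 0 \<Longrightarrow> \<forall>i\<in>S. e i = 0"
    and dep: "\<forall>j\<in>V. (\<Sum>i\<in>S. c i * M i j) = 0" and i0: "i0 \<in> S" "c i0 \<noteq> 0"
  shows "rows_indep V M (S - {i0})"
  unfolding rows_indep_def
proof (intro allI impI)
  have c_sum: "(\<Sum>i\<in>S. c i) \<noteq> 0" using zero_sum_indep[OF dep] i0 by blast
  fix d assume d_dep: "\<forall>j\<in>V. (\<Sum>i\<in>S - {i0}. d i * M i j) = 0"
  define d' where "d' i = (if i = i0 then 0 else d i)" for i
  have d'_sum: "(\<Sum>i\<in>S. d' i * f i) = (\<Sum>i\<in>S - {i0}. d i * f i)" for f :: "'a \<Rightarrow> real"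
    using fin i0(1) by (simp add: sum.remove[of S i0] d'_def cong: sum.cong_simp)
  define K where "K = (\<Sum>i\<in>S - {i0}. d i) / (\<Sum>i\<in>S. c i)"
  define e where "e i = d' i - K * c i" for i
  have "(\<Sum>i\<in>S. e i * M i j) = (\<Sum>i\<in>S. d' i * M i j) - K * (\<Sum>i\<in>S. c i * M i j)" for j
    by (simp add: e_def left_diff_distrib sum_subtractf sum_distrib_left mult.assoc)
  then have e_dep: "\<forall>j\<in>V. (\<Sum>i\<in>S. e i * M i j) = 0" using d_dep dep d'_sum by simp
  have "(\<Sum>i\<in>S. e i) = (\<Sum>i\<in>S. d' i) - K * (\<Sum>i\<in>S. c i)"
    by (simp add: e_def sum_subtractf sum_distrib_left)
  then have e_sum: "(\<Sum>i\<in>S. e i) = 0" using d'_sum[of "\<lambda>_. 1"] c_sum by (simp add: K_def)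
  from e_dep e_sum have e0: "\<forall>i\<in>S. e i = 0" by (rule zero_sum_indep)
  then have "K = 0" using i0 by (auto simp: e_def d'_def)
  then have "e i = d i" if "i \<in> S - {i0}" for i using that by (simp add: e_def d'_def)
  then show "\<forall>i\<in>S - {i0}. d i = 0" using e0 by auto
qed

lemma combination_vanishes_on_constant_columns:
  fixes M M1 :: "'a \<Rightarrow> 'b \<Rightarrow> 'c::comm_semiring_1"
  assumes agree: "\<forall>i\<in>S. \<forall>j\<in>V1. M i j = M1 i j" and const: "\<forall>i\<in>S. \<forall>j\<in>V - V1. M i j = g"
    and dep: "\<forall>j\<in>V1. (\<Sum>i\<in>S. c i * M1 i j) = 0" and zero_sum: "(\<Sum>i\<in>S. c i) = 0"
  shows "\<forall>j\<in>V. (\<Sum>i\<in>S. c i * M i j) = 0"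
proof
  fix j assume j: "j \<in> V"
  show "(\<Sum>i\<in>S. c i * M i j) = 0"
  proof (cases "j \<in> V1")
    case True
    then show ?thesis using agree dep by (simp cong: sum.cong)
  next
    case False
    then have "(\<Sum>i\<in>S. c i * M i j) = (\<Sum>i\<in>S. c i * g)"
      using const j by (intro sum.cong) auto
    also have "\<dots> = (\<Sum>i\<in>S. c i) * g" by (rule sum_distrib_right[symmetric])
    finally show ?thesis using zero_sum by simp
  qed
qed

lemma rows_indep_constant_columns_drop_one:
  assumes fin: "finite S" and ind: "rows_indep V M S"
    and agree: "\<forall>i\<in>S. \<forall>j\<in>V1. M i j = M1 i j" and const: "\<forall>i\<in>S. \<forall>j\<in>V - V1. M i j = g"
  shows "\<exists>T\<subseteq>S. rows_indep V1 M1 T \<and> card S \<le> card T + 1"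
proof (cases "rows_indep V1 M1 S")
  case True
  then show ?thesis by auto
next
  case False
  then obtain c i0 where dep: "\<forall>j\<in>V1. (\<Sum>i\<in>S. c i * M1 i j) = 0" and i0: "i0 \<in> S" "c i0 \<noteq> 0"
    unfolding rows_indep_def by blast
  have "rows_indep V1 M1 (S - {i0})"
  proof (rule rows_indep_Diff_singleton[OF fin _ dep i0])
    fix e assume "\<forall>j\<in>V1. (\<Sum>i\<in>S. e i * M1 i j) = 0" "(\<Sum>i\<in>S. e i) = 0"
    then show "\<forall>i\<in>S. e i = 0"
      using ind combination_vanishes_on_constant_columns[OF agree const] unfolding rows_indep_def by blast
  qed
  moreover have "card S \<le> card (S - {i0}) + 1" using fin i0 by (simp add: card_Diff_singleton)
  ultimately show ?thesis by blast
qed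

lemma mat_rank_le_constant_columns:
  assumes fin: "finite V" and sub: "V1 \<subseteq> V"
    and agree: "\<forall>i\<in>V1. \<forall>j\<in>V1. M i j = M1 i j" and const: "\<forall>i\<in>V1. \<forall>j\<in>V - V1. M i j = g"
  shows "mat_rank V M \<le> mat_rank V1 M1 + card (V - V1) + 1"
proof (rule mat_rank_le[OF fin])
  fix S assume S: "S \<subseteq> V" "rows_indep V M S"
  have fin_S: "finite S" using S(1) fin by (rule finite_subset)
  have "rows_indep V M (S \<inter> V1)" using rows_indep_subset[OF S(2) _ fin_S] by blast
  then obtain T where T: "T \<subseteq> S \<inter> V1" "rows_indep V1 M1 T" "card (S \<inter> V1) \<le> card T + 1"
    using rows_indep_constant_columns_drop_one[of "S \<inter> V1" V M V1 M1 g] fin_S agree const by blast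
  have "card T \<le> mat_rank V1 M1"
    using T(1,2) sub fin by (intro card_le_mat_rank) (auto intro: finite_subset)
  moreover have "card (S - V1) \<le> card (V - V1)" using S(1) fin by (intro card_mono) auto
  moreover have "card S = card (S \<inter> V1) + card (S - V1)"
    using fin_S by (rule card_Int_Diff)
  ultimately show "card S \<le> mat_rank V1 M1 + card (V - V1) + 1" using T(3) by linarith
qed

lemma mur_attained: "\<exists>\<alpha> \<beta> \<gamma> \<delta>. \<alpha> \<noteq> 0 \<and> mur V E = mat_rank V (univ_adj E \<alpha> \<beta> \<gamma> \<delta>)"
  unfolding mur_def by (rule LeastI[of _ "mat_rank V (univ_adj E 1 0 0 0)"]) (rule exI[of _ 1], auto)

lemma mur_le_mat_rank: "\<alpha> \<noteq> 0 \<Longrightarrow> mur V E \<le> mat_rank V (univ_adj E \<alpha> \<beta> \<gamma> \<delta>)"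
  unfolding mur_def by (rule Least_le) blast

lemma univ_adj_union_disjoint:
  assumes "E1 \<subseteq> V1 \<times> V1" "E2 \<subseteq> V2 \<times> V2" "V1 \<inter> V2 = {}" "i \<in> V1"
  shows "j \<in> V1 \<Longrightarrow> univ_adj (E1 \<union> E2) \<alpha> \<beta> \<gamma> \<delta> i j = univ_adj E1 \<alpha> \<beta> \<gamma> \<delta> i j"
    and "j \<in> V2 \<Longrightarrow> univ_adj (E1 \<union> E2) \<alpha> \<beta> \<gamma> \<delta> i j = \<gamma>"
proof -
  have "{u. (i, u) \<in> E1 \<union> E2} = {u. (i, u) \<in> E1}" using assms by auto
  then have "degree (E1 \<union> E2) i = degree E1 i" by (simp add: degree_def)
  moreover have "(i, j) \<notin> E2" using assms by auto
  ultimately show "j \<in> V1 \<Longrightarrow> univ_adj (E1 \<union> E2) \<alpha> \<beta> \<gamma> \<delta> i j = univ_adj E1 \<alpha> \<beta> \<gamma> \<delta> i j"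
    by (cases "i = j") (simp_all add: univ_adj_def)
  show "j \<in> V2 \<Longrightarrow> univ_adj (E1 \<union> E2) \<alpha> \<beta> \<gamma> \<delta> i j = \<gamma>"
    using assms by (auto simp: univ_adj_def)
qed

theorem theorem16:
  fixes V1 V2 :: "'a set" and E1 E2 :: "('a \<times> 'a) set"
  assumes "simple_graph V1 E1" and "simple_graph V2 E2" and "V1 \<inter> V2 = {}"
  shows "mur (V1 \<union> V2) (E1 \<union> E2) \<le> mur V1 E1 + card V2 + 1"
proof -
  have fin: "finite (V1 \<union> V2)" and E1: "E1 \<subseteq> V1 \<times> V1" and E2: "E2 \<subseteq> V2 \<times> V2"
    using assms(1,2) by (auto simp: simple_graph_def)
  obtain \<alpha> \<beta> \<gamma> \<delta> where \<alpha>: "\<alpha> \<noteq> 0" and mur1: "mur V1 E1 = mat_rank V1 (univ_adj E1 \<alpha> \<beta> \<gamma> \<delta>)"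
    using mur_attained by blast
  from \<alpha> have "mur (V1 \<union> V2) (E1 \<union> E2) \<le> mat_rank (V1 \<union> V2) (univ_adj (E1 \<union> E2) \<alpha> \<beta> \<gamma> \<delta>)"
    by (rule mur_le_mat_rank)
  also have "\<dots> \<le> mat_rank V1 (univ_adj E1 \<alpha> \<beta> \<gamma> \<delta>) + card (V1 \<union> V2 - V1) + 1"
    using univ_adj_union_disjoint[OF E1 E2 assms(3)]
    by (intro mat_rank_le_constant_columns[OF fin]) auto
  also have "V1 \<union> V2 - V1 = V2" using assms(3) by blast
  finally show ?thesis using mur1 by simp
qed

end
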